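(* Let $d\ge3$, $\alpha<2$ and $1<q\le\frac{d-\alpha}{d-2}$. Then there is no positive function $u$ on $\mathbb Z^d$ satisfying $\Delta u(x)+(1+|x|)^{-\alpha}u(x)^q\le0$ for all $x\in\mathbb Z^d$.
   Context: $\mathbb Z^d$ is the lattice graph with $\mu_{xy}=1$ if $\|x-y\|_1=1$ and $\mu_{xy}=0$ otherwise, so $\mu(x)=2d$ and $\Delta u(x)=\frac1{2d}\sum_{y:\|y-x\|_1=1}(u(y)-u(x))$. $|x|$ is the Euclidean norm. *)

theory Defs
  imports "HOL-Analysis.Analysis"
begin

text \<open>The lattice Z^d is modelled as int ^ 'd, with d = CARD('d).\<close>

definition l1dist :: "int ^ 'd \<Rightarrow> int ^ 'd \<Rightarrow> int" where
  "l1dist x y = (\<Sum>i\<in>UNIV. \<bar>x $ i - y $ i\<bar>)"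

definition lattice_nbrs :: "int ^ 'd \<Rightarrow> (int ^ 'd) set" where
  "lattice_nbrs x = {y. l1dist x y = 1}"

definition lattice_laplacian :: "(int ^ 'd \<Rightarrow> real) \<Rightarrow> int ^ 'd \<Rightarrow> real" where
  "lattice_laplacian u x =
     (1 / (2 * real CARD('d))) * (\<Sum>y\<in>lattice_nbrs x. u y - u x)"

definition lattice_norm :: "int ^ 'd \<Rightarrow> real" where
  "lattice_norm x = sqrt (\<Sum>i\<in>UNIV. (real_of_int (x $ i))\<^sup>2)"

end

theory Submission
  imports Defs
begin

text \<open>
  Suppose u > 0 and -\<Delta>u \<ge> a, where a(x) = (1 + |x|)^(-\<alpha>) u(x)^q. Test this against
  \<phi>_n(x) = \<psi>(|x|^2 / n^2)^s, where \<psi> is a C^(1,1) cutoff equal to 1 on [0, 1] and to 0 on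
  [3, \<infinity>), and s \<ge> q / (q - 1). Summation by parts and the convexity of t \<mapsto> t^s give
  I_n = \<Sum> a \<phi>_n \<le> \<Sum> u (-\<Delta>\<phi>_n) \<le> C n^(-2) \<Sum>_(A_n) u \<psi>^(s-1), where A_n is the annulus
  n - 1 < |x| < sqrt 3 n outside which -\<Delta>\<phi>_n \<le> 0. Hoelder's inequality with exponents q and
  q / (q - 1) bounds the right-hand side by C n^e J_n^(1/q), where J_n = \<Sum>_(A_n) a \<phi>_n and
  e = (d + \<alpha> / (q - 1)) (1 - 1/q) - 2; the hypothesis q \<le> (d - \<alpha>) / (d - 2) says exactly e \<le> 0.
  From I_n \<le> K J_n^(1/q) \<le> K I_n^(1/q) the I_n are bounded, so a is summable; then J_n, which is
  dominated by a tail of that series, tends to 0, and hence so does I_n, contradicting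
  I_n \<ge> a(0) > 0.
\<close>

section \<open>The lattice Laplacian\<close>

lemma diff_axis_eq_add_axis_neg:
  fixes x :: "'a::ab_group_add ^ 'n"
  shows "x - axis i c = x + axis i (- c)"
  by (simp add: axis_def vec_eq_iff)

lemma l1dist_eq_1_iff:
  fixes x y :: "int ^ 'd"
  shows "l1dist x y = 1 \<longleftrightarrow> (\<exists>i. y = x + axis i 1 \<or> y = x - axis i 1)"
proof
  assume dist: "l1dist x y = 1"
  define z where "z = y - x"
  have sum_z: "(\<Sum>j\<in>UNIV. \<bar>z $ j\<bar>) = 1"
    using dist by (simp add: l1dist_def z_def abs_minus_commute)
  then obtain i where "z $ i \<noteq> 0"
    by (metis (no_types, lifting) abs_0 sum.neutral zero_neq_one)
  have split: "(\<Sum>j\<in>UNIV. \<bar>z $ j\<bar>) = \<bar>z $ i\<bar> + (\<Sum>j\<in>UNIV - {i}. \<bar>z $ j\<bar>)"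
    by (simp add: sum.remove)
  have "(\<Sum>j\<in>UNIV - {i}. \<bar>z $ j\<bar>) \<ge> 0"
    by (simp add: sum_nonneg)
  then have zi: "\<bar>z $ i\<bar> = 1" and "(\<Sum>j\<in>UNIV - {i}. \<bar>z $ j\<bar>) = 0"
    using sum_z split \<open>z $ i \<noteq> 0\<close> by linarith+
  then have "z $ j = 0" if "j \<noteq> i" for j
    using that by (subst (asm) sum_nonneg_eq_0_iff) auto
  with zi have "z = axis i 1 \<or> z = - axis i 1"
    by (auto simp: vec_eq_iff axis_def abs_if split: if_splits)
  moreover have "y = x + z"
    by (simp add: z_def)
  ultimately show "\<exists>i. y = x + axis i 1 \<or> y = x - axis i 1"
    by auto
next
  assume "\<exists>i. y = x + axis i 1 \<or> y = x - axis i 1"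
  then obtain i where "y = x + axis i 1 \<or> y = x - axis i 1"
    by blast
  then have "\<bar>x $ j - y $ j\<bar> = (if j = i then 1 else 0)" for j
    by (auto simp: axis_def)
  then show "l1dist x y = 1"
    by (simp add: l1dist_def)
qed

lemma sum_lattice_nbrs:
  fixes f :: "int ^ 'd \<Rightarrow> real"
  shows "(\<Sum>y\<in>lattice_nbrs x. f y) = (\<Sum>i\<in>UNIV. f (x + axis i 1) + f (x - axis i 1))"
proof -
  have nbrs: "lattice_nbrs x = range (\<lambda>i. x + axis i 1) \<union> range (\<lambda>i. x - axis i 1)"
    unfolding lattice_nbrs_def using l1dist_eq_1_iff by blast
  have "(x + axis i 1) $ i \<noteq> (x - axis j 1) $ i" for i j :: 'd
    by (simp add: axis_def)
  then have "x + axis i 1 \<noteq> x - axis j 1" for i j :: 'd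
    by metis
  then have disj: "range (\<lambda>i. x + axis i 1) \<inter> range (\<lambda>i. x - axis i 1) = {}"
    by blast
  have "inj (\<lambda>i. x + axis i 1)" "inj (\<lambda>i. x - axis i 1)"
    by (auto intro!: injI simp: axis_eq_axis)
  then show ?thesis
    unfolding nbrs by (simp add: sum.union_disjoint disj sum.reindex sum.distrib)
qed

lemma lattice_laplacian_eq:
  fixes u :: "int ^ 'd \<Rightarrow> real"
  shows "lattice_laplacian u x =
    (\<Sum>i\<in>(UNIV :: 'd set). u (x + axis i 1) + u (x - axis i 1) - 2 * u x) / (2 * real CARD('d))"
  unfolding lattice_laplacian_def sum_lattice_nbrs by (simp add: algebra_simps)

lemma lattice_laplacian_power_nonneg_at_zero:
  fixes f :: "int ^ 'd \<Rightarrow> real"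
  assumes "\<And>y. 0 \<le> f y" "f x = 0"
  shows "0 \<le> lattice_laplacian (\<lambda>y. f y ^ s) x"
  using assms by (cases s) (simp_all add: lattice_laplacian_def sum_nonneg)

lemma power_ge_tangent:
  fixes a b :: real
  assumes "0 \<le> a" "0 \<le> b"
  shows "a ^ s + real s * a ^ (s - 1) * (b - a) \<le> b ^ s"
proof (induction s)
  case 0
  then show ?case
    by simp
next
  case (Suc s)
  have "b * (a ^ s + real s * a ^ (s - 1) * (b - a)) \<le> b ^ Suc s"
    using Suc.IH assms by (simp add: mult_left_mono)
  moreover have "b * (a ^ s + real s * a ^ (s - 1) * (b - a)) =
      a ^ Suc s + real (Suc s) * a ^ s * (b - a) + real s * a ^ (s - 1) * (b - a)\<^sup>2"
    by (cases s) (simp_all add: algebra_simps power2_eq_square)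
  moreover have "0 \<le> real s * a ^ (s - 1) * (b - a)\<^sup>2"
    using assms by simp
  ultimately show ?case
    by simp
qed

lemma lattice_laplacian_power_ge:
  fixes f :: "int ^ 'd \<Rightarrow> real"
  assumes nonneg: "\<And>y. 0 \<le> f y"
  shows "real s * f x ^ (s - 1) * lattice_laplacian f x \<le> lattice_laplacian (\<lambda>y. f y ^ s) x"
proof -
  have "real s * f x ^ (s - 1) * (f (x + axis i 1) + f (x - axis i 1) - 2 * f x)
      \<le> f (x + axis i 1) ^ s + f (x - axis i 1) ^ s - 2 * f x ^ s" for i
  proof -
    have "real s * f x ^ (s - 1) * (f (x + axis i 1) + f (x - axis i 1) - 2 * f x) =
        real s * f x ^ (s - 1) * (f (x + axis i 1) - f x) + real s * f x ^ (s - 1) * (f (x - axis i 1) - f x)"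
      by (simp add: algebra_simps)
    then show ?thesis
      using power_ge_tangent[OF nonneg nonneg, of x s "x + axis i 1"]
        power_ge_tangent[OF nonneg nonneg, of x s "x - axis i 1"]
      by linarith
  qed
  then have "(\<Sum>i\<in>UNIV. real s * f x ^ (s - 1) * (f (x + axis i 1) + f (x - axis i 1) - 2 * f x))
      \<le> (\<Sum>i\<in>UNIV. f (x + axis i 1) ^ s + f (x - axis i 1) ^ s - 2 * f x ^ s)"
    by (rule sum_mono)
  then show ?thesis
    by (simp add: lattice_laplacian_eq sum_distrib_left divide_right_mono)
qed

lemma sum_translate_mult:
  fixes u \<phi> :: "'a::ab_group_add \<Rightarrow> real"
  assumes T: "finite T" and supp: "\<And>x. x \<notin> F \<Longrightarrow> \<phi> x = 0"
    and F: "F \<subseteq> T" "(\<lambda>x. x + v) ` F \<subseteq> T"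
  shows "(\<Sum>x\<in>T. u (x + v) * \<phi> x) = (\<Sum>x\<in>T. u x * \<phi> (x - v))"
proof -
  have "(\<Sum>x\<in>T. u (x + v) * \<phi> x) = (\<Sum>x\<in>F. u (x + v) * \<phi> x)"
    using F(1) supp by (intro sum.mono_neutral_right[OF T]) auto
  also have "\<dots> = (\<Sum>y\<in>(\<lambda>x. x + v) ` F. u y * \<phi> (y - v))"
    by (subst sum.reindex) (auto simp: inj_on_def)
  also have "\<dots> = (\<Sum>x\<in>T. u x * \<phi> (x - v))"
  proof (intro sum.mono_neutral_left[OF T F(2)] ballI)
    fix y
    assume "y \<in> T - (\<lambda>x. x + v) ` F"
    then have "y - v \<notin> F"
      by (metis DiffD2 diff_add_cancel image_eqI)
    then show "u y * \<phi> (y - v) = 0"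
      by (simp add: supp)
  qed
  finally show ?thesis .
qed

lemma sum_lattice_laplacian_mult_commute:
  fixes u \<phi> :: "int ^ 'd \<Rightarrow> real"
  assumes T: "finite T" and supp: "\<And>x. x \<notin> F \<Longrightarrow> \<phi> x = 0" and "F \<subseteq> T"
    and nbrs: "\<And>x i. x \<in> F \<Longrightarrow> x + axis i 1 \<in> T \<and> x - axis i 1 \<in> T"
  shows "(\<Sum>x\<in>T. lattice_laplacian u x * \<phi> x) = (\<Sum>x\<in>T. u x * lattice_laplacian \<phi> x)"
proof -
  have translate: "(\<Sum>x\<in>T. u (x + v) * \<phi> x) = (\<Sum>x\<in>T. u x * \<phi> (x - v))"
    if "v = axis i 1 \<or> v = - axis i 1" for v i
    using that nbrs by (intro sum_translate_mult[OF T supp \<open>F \<subseteq> T\<close>]) auto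
  have per_axis: "(\<Sum>x\<in>T. (u (x + axis i 1) + u (x - axis i 1) - 2 * u x) * \<phi> x) =
      (\<Sum>x\<in>T. u x * (\<phi> (x + axis i 1) + \<phi> (x - axis i 1) - 2 * \<phi> x))" for i
    using translate[of "axis i 1" i] translate[of "- axis i 1" i]
    by (simp add: algebra_simps sum.distrib sum_subtractf sum_distrib_left)
  have "(\<Sum>x\<in>T. lattice_laplacian u x * \<phi> x) =
      (\<Sum>i\<in>UNIV. \<Sum>x\<in>T. (u (x + axis i 1) + u (x - axis i 1) - 2 * u x) * \<phi> x) / (2 * real CARD('d))"
    unfolding lattice_laplacian_eq by (subst sum.swap) (simp add: sum_divide_distrib sum_distrib_right)
  also have "\<dots> = (\<Sum>i\<in>UNIV. \<Sum>x\<in>T. u x * (\<phi> (x + axis i 1) + \<phi> (x - axis i 1) - 2 * \<phi> x)) /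
      (2 * real CARD('d))"
    by (simp add: per_axis)
  also have "\<dots> = (\<Sum>x\<in>T. u x * lattice_laplacian \<phi> x)"
    unfolding lattice_laplacian_eq by (subst sum.swap) (simp add: sum_divide_distrib sum_distrib_left)
  finally show ?thesis .
qed

section \<open>Norms and boxes in the lattice\<close>

definition lattice_sqnorm :: "int ^ 'd \<Rightarrow> real" where
  "lattice_sqnorm x = (\<Sum>i\<in>UNIV. (real_of_int (x $ i))\<^sup>2)"

lemma lattice_sqnorm_nonneg: "0 \<le> lattice_sqnorm x"
  by (simp add: lattice_sqnorm_def sum_nonneg)

lemma lattice_norm_eq_sqrt: "lattice_norm x = sqrt (lattice_sqnorm x)"
  by (simp add: lattice_norm_def lattice_sqnorm_def)

lemma lattice_norm_nonneg: "0 \<le> lattice_norm x"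
  by (simp add: lattice_norm_eq_sqrt lattice_sqnorm_nonneg)

lemma lattice_norm_power2: "(lattice_norm x)\<^sup>2 = lattice_sqnorm x"
  by (simp add: lattice_norm_eq_sqrt lattice_sqnorm_nonneg)

lemma lattice_norm_le_iff: "0 \<le> R \<Longrightarrow> lattice_norm x \<le> R \<longleftrightarrow> lattice_sqnorm x \<le> R\<^sup>2"
  by (metis lattice_norm_nonneg lattice_norm_power2 power2_le_iff_abs_le abs_of_nonneg)

lemma lattice_norm_le_if_lattice_sqnorm_less:
  assumes "lattice_sqnorm x < 3 * R\<^sup>2" "0 \<le> R"
  shows "lattice_norm x \<le> 2 * R"
proof -
  have "lattice_sqnorm x \<le> 4 * R\<^sup>2"
    using assms(1) zero_le_power2[of R] by linarith
  then show ?thesis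
    using assms(2) by (simp add: lattice_norm_le_iff power_mult_distrib)
qed

lemma power2_coord_le_lattice_sqnorm: "(real_of_int (x $ i))\<^sup>2 \<le> lattice_sqnorm x"
  unfolding lattice_sqnorm_def by (rule member_le_sum) auto

lemma abs_coord_le_lattice_norm: "\<bar>real_of_int (x $ i)\<bar> \<le> lattice_norm x"
  unfolding lattice_norm_eq_sqrt
  using real_sqrt_le_mono[OF power2_coord_le_lattice_sqnorm[of x i]] by simp

lemma lattice_sqnorm_add_axis:
  "lattice_sqnorm (x + axis i c) = lattice_sqnorm x + 2 * c * x $ i + c\<^sup>2"
proof -
  have "lattice_sqnorm (x + axis i c) = (\<Sum>j\<in>UNIV. (real_of_int (x $ j))\<^sup>2 +
      (if j = i then 2 * real_of_int c * x $ i + (real_of_int c)\<^sup>2 else 0))"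
    unfolding lattice_sqnorm_def by (rule sum.cong) (auto simp: axis_def power2_eq_square algebra_simps)
  then show ?thesis
    by (simp add: sum.distrib lattice_sqnorm_def)
qed

lemma lattice_norm_add_axis_le: "lattice_norm (x + axis i c) \<le> lattice_norm x + \<bar>real_of_int c\<bar>"
proof -
  have "c * real_of_int (x $ i) \<le> \<bar>real_of_int c\<bar> * \<bar>real_of_int (x $ i)\<bar>"
    by (metis abs_ge_self abs_mult)
  also have "\<dots> \<le> \<bar>real_of_int c\<bar> * lattice_norm x"
    by (simp add: abs_coord_le_lattice_norm mult_left_mono)
  finally have "2 * c * real_of_int (x $ i) \<le> 2 * \<bar>real_of_int c\<bar> * lattice_norm x"
    by simp
  then have "lattice_sqnorm (x + axis i c) \<le> (lattice_norm x + \<bar>real_of_int c\<bar>)\<^sup>2"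
    by (simp add: lattice_sqnorm_add_axis power2_sum lattice_norm_power2 algebra_simps)
  moreover have "0 \<le> lattice_norm x + \<bar>real_of_int c\<bar>"
    by (simp add: lattice_norm_nonneg)
  ultimately show ?thesis
    by (simp add: lattice_norm_le_iff)
qed

definition lattice_box :: "int \<Rightarrow> (int ^ 'd) set" where
  "lattice_box K = {x. \<forall>i. \<bar>x $ i\<bar> \<le> K}"

lemma lattice_box_coord: "x \<in> lattice_box K \<Longrightarrow> \<bar>x $ i\<bar> \<le> K"
  by (simp add: lattice_box_def)

lemma lattice_box_eq_image: "lattice_box K = vec_lambda ` (PiE UNIV (\<lambda>_. {-K..K}))"
proof (intro equalityI subsetI)
  fix x :: "int ^ 'd"
  assume "x \<in> lattice_box K"
  then have "x $ i \<in> {-K..K}" for i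
    using lattice_box_coord[of x K i] by auto
  then have "vec_nth x \<in> PiE UNIV (\<lambda>_. {-K..K})"
    by (simp add: PiE_iff)
  then show "x \<in> vec_lambda ` (PiE UNIV (\<lambda>_. {-K..K}))"
    by (metis image_eqI vec_nth_inverse)
next
  fix y :: "int ^ 'd"
  assume "y \<in> vec_lambda ` (PiE UNIV (\<lambda>_. {-K..K}))"
  then obtain f where f: "f \<in> PiE UNIV (\<lambda>_. {-K..K})" and y: "y = vec_lambda f"
    by blast
  have "\<bar>y $ i\<bar> \<le> K" for i
    using PiE_mem[OF f, of i] by (auto simp: y)
  then show "y \<in> lattice_box K"
    by (simp add: lattice_box_def)
qed

lemma finite_lattice_box: "finite (lattice_box K)"
  unfolding lattice_box_eq_image by (intro finite_imageI finite_PiE) auto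

lemma card_lattice_box: "card (lattice_box K :: (int ^ 'd) set) = nat (2 * K + 1) ^ CARD('d)"
proof -
  have "inj_on (vec_lambda :: ('d \<Rightarrow> int) \<Rightarrow> int ^ 'd) (PiE UNIV (\<lambda>_. {-K..K}))"
    by (rule inj_onI) (metis vec_lambda_inverse UNIV_I)
  then have "card (lattice_box K :: (int ^ 'd) set) = card (PiE (UNIV :: 'd set) (\<lambda>_. {-K..K}))"
    unfolding lattice_box_eq_image by (rule card_image)
  then show ?thesis
    by (simp add: card_PiE)
qed

lemma lattice_box_mono: "K \<le> L \<Longrightarrow> lattice_box K \<subseteq> lattice_box L"
  unfolding lattice_box_def by (auto intro: order.trans)

lemma lattice_nbrs_mem_lattice_box:
  assumes "x \<in> lattice_box K"
  shows "x + axis i 1 \<in> lattice_box (K + 1)" "x - axis i 1 \<in> lattice_box (K + 1)"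
proof -
  have "\<bar>x $ j + (if j = i then c else 0)\<bar> \<le> K + 1" if "\<bar>c\<bar> \<le> 1" for j c
    using lattice_box_coord[OF assms, of j] that by auto
  then show "x + axis i 1 \<in> lattice_box (K + 1)" "x - axis i 1 \<in> lattice_box (K + 1)"
    unfolding diff_axis_eq_add_axis_neg by (simp_all add: lattice_box_def axis_def)
qed

lemma mem_lattice_box_if_lattice_norm_le:
  assumes "lattice_norm x \<le> of_int K"
  shows "x \<in> lattice_box K"
proof -
  have "of_int \<bar>x $ i\<bar> \<le> (of_int K :: real)" for i
    using abs_coord_le_lattice_norm[of x i] assms by simp
  then show ?thesis
    unfolding lattice_box_def of_int_le_iff by blast
qed

lemma mem_lattice_box_if_lattice_sqnorm_less:
  "lattice_sqnorm x < 3 * (real n)\<^sup>2 \<Longrightarrow> x \<in> lattice_box (2 * int n)"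
  using lattice_norm_le_if_lattice_sqnorm_less[of x "real n"]
  by (intro mem_lattice_box_if_lattice_norm_le) simp

lemma lattice_ball_subset_lattice_box: "{x. lattice_norm x \<le> real m} \<subseteq> lattice_box (int m)"
  using mem_lattice_box_if_lattice_norm_le[of _ "int m"] by auto

lemma finite_lattice_ball: "finite {x :: int ^ 'd. lattice_norm x \<le> real m}"
  using lattice_ball_subset_lattice_box finite_lattice_box by (rule finite_subset)

section \<open>A radial cutoff with bounded second differences\<close>

definition sq_ramp :: "real \<Rightarrow> real" where
  "sq_ramp t = (max t 0)\<^sup>2"

lemma sq_ramp_tangent_bounds:
  "sq_ramp a + 2 * max a 0 * (b - a) \<le> sq_ramp b"
  "sq_ramp b \<le> sq_ramp a + 2 * max a 0 * (b - a) + (b - a)\<^sup>2"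
proof -
  have "2 * (a * b) \<le> a * a" if "a \<le> 0" "0 < b"
    using that mult_nonpos_nonneg[of a b] zero_le_square[of a] by linarith
  moreover have "0 \<le> (a - b) * (a - b)"
    by simp
  ultimately show "sq_ramp a + 2 * max a 0 * (b - a) \<le> sq_ramp b"
    "sq_ramp b \<le> sq_ramp a + 2 * max a 0 * (b - a) + (b - a)\<^sup>2"
    unfolding sq_ramp_def max_def by (auto simp: power2_eq_square algebra_simps)
qed

definition cutoff :: "real \<Rightarrow> real" where
  "cutoff t = 1 - sq_ramp (t - 1) / 2 + sq_ramp (t - 2) - sq_ramp (t - 3) / 2"

definition cutoff_deriv :: "real \<Rightarrow> real" where
  "cutoff_deriv t = - max (t - 1) 0 + 2 * max (t - 2) 0 - max (t - 3) 0"

lemma cutoff_eq: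
  "cutoff t = (if t \<le> 1 then 1 else if t \<le> 2 then 1 - (t - 1)\<^sup>2 / 2
    else if t \<le> 3 then (3 - t)\<^sup>2 / 2 else 0)"
  unfolding cutoff_def sq_ramp_def by (simp add: max_def power2_eq_square field_simps)

text \<open>
  Only the ramps with negative coefficient (total weight 1) can push the cutoff below its
  tangent line, each by at most its weight times (b - a)^2.
\<close>

lemma cutoff_second_order_lower: "cutoff a + cutoff_deriv a * (b - a) - (b - a)\<^sup>2 \<le> cutoff b"
  using sq_ramp_tangent_bounds[where a = "a - 1" and b = "b - 1"]
    sq_ramp_tangent_bounds[where a = "a - 2" and b = "b - 2"]
    sq_ramp_tangent_bounds[where a = "a - 3" and b = "b - 3"]
  unfolding cutoff_def cutoff_deriv_def by (simp add: algebra_simps)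

lemma cutoff_deriv_ge: "-1 \<le> cutoff_deriv t"
  by (simp add: cutoff_deriv_def max_def)

lemma cutoff_eq_1: "t \<le> 1 \<Longrightarrow> cutoff t = 1"
  and cutoff_eq_0: "3 \<le> t \<Longrightarrow> cutoff t = 0"
  by (simp_all add: cutoff_eq)

lemma cutoff_pos: "t < 3 \<Longrightarrow> 0 < cutoff t"
  and cutoff_nonneg: "0 \<le> cutoff t"
  and cutoff_le_1: "cutoff t \<le> 1"
  unfolding cutoff_eq using power_le_one[of "t - 1" 2] power_le_one[of "3 - t" 2] by auto

definition radial_cutoff :: "real \<Rightarrow> int ^ 'd \<Rightarrow> real" where
  "radial_cutoff R x = cutoff (lattice_sqnorm x / R\<^sup>2)"

lemma radial_cutoff_nonneg: "0 \<le> radial_cutoff R x"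
  and radial_cutoff_le_1: "radial_cutoff R x \<le> 1"
  by (simp_all add: radial_cutoff_def cutoff_nonneg cutoff_le_1)

lemma radial_cutoff_pos: "lattice_sqnorm x < 3 * R\<^sup>2 \<Longrightarrow> 0 < radial_cutoff R x"
  unfolding radial_cutoff_def by (rule cutoff_pos) (auto simp: divide_less_eq)

lemma radial_cutoff_eq_0: "R \<noteq> 0 \<Longrightarrow> 3 * R\<^sup>2 \<le> lattice_sqnorm x \<Longrightarrow> radial_cutoff R x = 0"
  unfolding radial_cutoff_def by (rule cutoff_eq_0) (simp add: le_divide_eq)

lemma radial_cutoff_eq_1:
  assumes "lattice_norm x \<le> R"
  shows "radial_cutoff R x = 1"
proof -
  have "0 \<le> R"
    using assms lattice_norm_nonneg order.trans by blast
  with assms have "lattice_sqnorm x \<le> R\<^sup>2"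
    by (simp add: lattice_norm_le_iff)
  then have "lattice_sqnorm x / R\<^sup>2 \<le> 1"
    by (cases "R = 0") simp_all
  then show ?thesis
    by (simp add: radial_cutoff_def cutoff_eq_1)
qed

lemma radial_cutoff_second_difference_ge:
  fixes x :: "int ^ 'd"
  shows "- 2 / R\<^sup>2 - (8 * (real_of_int (x $ i))\<^sup>2 + 2) / (R\<^sup>2)\<^sup>2 \<le>
    radial_cutoff R (x + axis i 1) + radial_cutoff R (x - axis i 1) - 2 * radial_cutoff R x"
proof -
  define t where "t = 1 / R\<^sup>2"
  define r where "r = lattice_sqnorm x * t"
  define y where "y = real_of_int (x $ i)"
  have shift: "radial_cutoff R (x + axis i c) = cutoff (r + (2 * c * y + c\<^sup>2) * t)" for c
    unfolding radial_cutoff_def lattice_sqnorm_add_axis r_def t_def y_def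
    by (simp add: add_divide_distrib add.assoc)
  have "radial_cutoff R (x + axis i 1) = cutoff (r + (2 * y + 1) * t)"
    "radial_cutoff R (x - axis i 1) = cutoff (r + (1 - 2 * y) * t)"
    unfolding diff_axis_eq_add_axis_neg using shift[of 1] shift[of "-1"] by simp_all
  moreover have "radial_cutoff R x = cutoff r"
    by (simp add: radial_cutoff_def r_def t_def)
  moreover have "cutoff r + cutoff_deriv r * ((2 * y + 1) * t) - ((2 * y + 1) * t)\<^sup>2
      \<le> cutoff (r + (2 * y + 1) * t)"
    "cutoff r + cutoff_deriv r * ((1 - 2 * y) * t) - ((1 - 2 * y) * t)\<^sup>2
      \<le> cutoff (r + (1 - 2 * y) * t)"
    using cutoff_second_order_lower[of r "r + (2 * y + 1) * t"]
      cutoff_second_order_lower[of r "r + (1 - 2 * y) * t"] by simp_all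
  moreover have "cutoff_deriv r * ((2 * y + 1) * t) + cutoff_deriv r * ((1 - 2 * y) * t) =
      2 * t * cutoff_deriv r"
    "((2 * y + 1) * t)\<^sup>2 + ((1 - 2 * y) * t)\<^sup>2 = (8 * y\<^sup>2 + 2) * t\<^sup>2"
    by (simp_all add: algebra_simps power2_eq_square)
  moreover have "- 2 * t \<le> 2 * t * cutoff_deriv r"
    using mult_left_mono[OF cutoff_deriv_ge[of r], of "2 * t"] by (simp add: t_def)
  ultimately have "- 2 * t - (8 * y\<^sup>2 + 2) * t\<^sup>2 \<le>
      radial_cutoff R (x + axis i 1) + radial_cutoff R (x - axis i 1) - 2 * radial_cutoff R x"
    by linarith
  then show ?thesis
    by (simp add: t_def y_def power2_eq_square)
qed

lemma lattice_laplacian_radial_cutoff_ge: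
  fixes x :: "int ^ 'd"
  assumes R: "1 \<le> R" and x: "lattice_sqnorm x < 3 * R\<^sup>2"
  shows "- 14 / R\<^sup>2 \<le> lattice_laplacian (radial_cutoff R) x"
proof -
  define d where "d = real CARD('d)"
  define t where "t = 1 / R\<^sup>2"
  define r where "r = lattice_sqnorm x * t"
  have "1 \<le> R\<^sup>2" "0 < R\<^sup>2"
    using R by auto
  then have t: "0 < t" "t \<le> 1" and r: "r < 3"
    using x by (auto simp: t_def r_def field_simps)
  have "- 2 * d * t - (8 * lattice_sqnorm x + 2 * d) * t\<^sup>2 =
      (\<Sum>i\<in>UNIV. - 2 * t - (8 * (real_of_int (x $ i))\<^sup>2 + 2) * t\<^sup>2)"
    by (simp add: d_def lattice_sqnorm_def sum.distrib sum_subtractf sum_distrib_left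
        sum_distrib_right algebra_simps)
  also have "\<dots> \<le> (\<Sum>i\<in>UNIV. radial_cutoff R (x + axis i 1) + radial_cutoff R (x - axis i 1) -
      2 * radial_cutoff R x)"
    using radial_cutoff_second_difference_ge[of R x]
    by (intro sum_mono) (simp add: t_def power2_eq_square)
  also have "\<dots> = 2 * d * lattice_laplacian (radial_cutoff R) x"
    by (simp add: d_def lattice_laplacian_eq)
  finally have "- 2 * d * t - (8 * lattice_sqnorm x + 2 * d) * t\<^sup>2 \<le>
      2 * d * lattice_laplacian (radial_cutoff R) x" .
  moreover have "(8 * lattice_sqnorm x + 2 * d) * t\<^sup>2 \<le> 24 * t + 2 * d * t"
  proof -
    have "(8 * lattice_sqnorm x + 2 * d) * t\<^sup>2 = 8 * r * t + 2 * d * t\<^sup>2"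
      by (simp add: r_def power2_eq_square algebra_simps)
    moreover have "8 * r * t \<le> 24 * t" "2 * d * t\<^sup>2 \<le> 2 * d * t"
      using r t mult_left_le[of t t] by (simp_all add: d_def power2_eq_square mult_left_mono)
    ultimately show ?thesis
      by linarith
  qed
  moreover have "24 * t \<le> 24 * d * t"
    using t by (simp add: d_def)
  ultimately have "2 * d * (- 14 * t) \<le> 2 * d * lattice_laplacian (radial_cutoff R) x"
    by linarith
  then have "- 14 * t \<le> lattice_laplacian (radial_cutoff R) x"
    by (rule mult_left_le_imp_le) (simp add: d_def)
  then show ?thesis
    by (simp add: t_def)
qed

lemma lattice_laplacian_radial_cutoff_eq_0:
  assumes "lattice_norm x + 1 \<le> R"
  shows "lattice_laplacian (radial_cutoff R) x = 0"
proof -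
  have nbr: "radial_cutoff R (x + axis i c) = 1" if "\<bar>c\<bar> \<le> 1" for i c
    using lattice_norm_add_axis_le[of x i c] that assms by (intro radial_cutoff_eq_1) linarith
  have "radial_cutoff R (x + axis i 1) = 1" "radial_cutoff R (x - axis i 1) = 1" for i
    unfolding diff_axis_eq_add_axis_neg by (simp_all add: nbr)
  moreover have "radial_cutoff R x = 1"
    using assms by (intro radial_cutoff_eq_1) linarith
  ultimately show ?thesis
    by (simp add: lattice_laplacian_eq)
qed

definition cutoff_annulus :: "real \<Rightarrow> (int ^ 'd) set" where
  "cutoff_annulus R = {x. R - 1 < lattice_norm x \<and> lattice_sqnorm x < 3 * R\<^sup>2}"

lemma cutoff_annulus_subset_lattice_box: "cutoff_annulus (real n) \<subseteq> lattice_box (2 * int n)"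
  by (auto simp: cutoff_annulus_def intro: mem_lattice_box_if_lattice_sqnorm_less)

lemma finite_cutoff_annulus: "finite (cutoff_annulus (real n))"
  using cutoff_annulus_subset_lattice_box finite_lattice_box by (rule finite_subset)

lemma neg_lattice_laplacian_radial_cutoff_power_le:
  fixes x :: "int ^ 'd"
  assumes R: "1 \<le> R"
  shows "- lattice_laplacian (\<lambda>y. radial_cutoff R y ^ s) x \<le>
    (if x \<in> cutoff_annulus R then 14 * s / R\<^sup>2 * radial_cutoff R x ^ (s - 1) else 0)"
proof -
  have convex: "real s * radial_cutoff R x ^ (s - 1) * lattice_laplacian (radial_cutoff R) x
      \<le> lattice_laplacian (\<lambda>y. radial_cutoff R y ^ s) x"
    by (rule lattice_laplacian_power_ge) (rule radial_cutoff_nonneg)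
  consider "lattice_norm x \<le> R - 1" | "3 * R\<^sup>2 \<le> lattice_sqnorm x" | "x \<in> cutoff_annulus R"
    by (force simp: cutoff_annulus_def)
  then show ?thesis
  proof cases
    case 1
    then have "x \<notin> cutoff_annulus R"
      by (simp add: cutoff_annulus_def)
    with 1 convex show ?thesis
      by (simp add: lattice_laplacian_radial_cutoff_eq_0)
  next
    case 2
    then have "x \<notin> cutoff_annulus R" "radial_cutoff R x = 0"
      using R by (simp_all add: cutoff_annulus_def radial_cutoff_eq_0)
    moreover have "0 \<le> lattice_laplacian (\<lambda>y. radial_cutoff R y ^ s) x"
      using \<open>radial_cutoff R x = 0\<close> by (rule lattice_laplacian_power_nonneg_at_zero[OF radial_cutoff_nonneg])
    ultimately show ?thesis
      by simp
  next
    case 3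
    then have "- 14 / R\<^sup>2 \<le> lattice_laplacian (radial_cutoff R) x"
      using R by (intro lattice_laplacian_radial_cutoff_ge) (simp_all add: cutoff_annulus_def)
    then have "real s * radial_cutoff R x ^ (s - 1) * (- 14 / R\<^sup>2)
        \<le> real s * radial_cutoff R x ^ (s - 1) * lattice_laplacian (radial_cutoff R) x"
      by (intro mult_left_mono) (simp_all add: radial_cutoff_nonneg)
    with 3 convex show ?thesis
      by simp
  qed
qed

lemma Holder_inequality_sum:
  fixes c v :: "'a \<Rightarrow> real"
  assumes fin: "finite A" and cpos: "\<And>x. x \<in> A \<Longrightarrow> 0 < c x" and vpos: "\<And>x. x \<in> A \<Longrightarrow> 0 < v x"
    and \<theta>: "0 < \<theta>" "\<theta> < 1"
  shows "(\<Sum>x\<in>A. c x powr \<theta> * v x powr (1 - \<theta>)) \<le>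
    (\<Sum>x\<in>A. c x) powr \<theta> * (\<Sum>x\<in>A. v x) powr (1 - \<theta>)"
proof (cases "A = {}")
  case True
  then show ?thesis
    by simp
next
  case False
  define C where "C = (\<Sum>x\<in>A. c x)"
  define V where "V = (\<Sum>x\<in>A. v x)"
  have C: "0 < C" and V: "0 < V"
    unfolding C_def V_def using fin False cpos vpos by (auto intro: sum_pos)
  have "c x powr \<theta> * v x powr (1 - \<theta>) / (C powr \<theta> * V powr (1 - \<theta>)) \<le>
      \<theta> * (c x / C) + (1 - \<theta>) * (v x / V)" if "x \<in> A" for x
    using Youngs_inequality_0[of \<theta> "1 - \<theta>" "c x / C" "v x / V"] \<theta> C V cpos[OF that] vpos[OF that]
    by (simp add: powr_divide)
  then have "(\<Sum>x\<in>A. c x powr \<theta> * v x powr (1 - \<theta>)) / (C powr \<theta> * V powr (1 - \<theta>))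
      \<le> (\<Sum>x\<in>A. \<theta> * (c x / C) + (1 - \<theta>) * (v x / V))"
    unfolding sum_divide_distrib by (rule sum_mono)
  also have "\<dots> = 1"
    using C V by (simp add: sum.distrib flip: sum_distrib_left sum_divide_distrib C_def V_def)
  finally show ?thesis
    using C V by (simp add: C_def[symmetric] V_def[symmetric] divide_le_eq)
qed

lemma scaling_exponent_le_2:
  fixes d \<alpha> q :: real
  assumes "2 < d" "1 < q" "q \<le> (d - \<alpha>) / (d - 2)"
  shows "(d + \<alpha> / (q - 1)) * (1 - 1 / q) \<le> 2"
proof -
  have "(d + \<alpha> / (q - 1)) * (1 - 1 / q) = (d * (q - 1) + \<alpha>) / q"
    using assms(2) by (simp add: field_simps)
  moreover have "d * (q - 1) + \<alpha> \<le> 2 * q"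
    using assms(1,3) by (simp add: le_divide_eq algebra_simps)
  ultimately show ?thesis
    using assms(2) by (simp add: divide_le_eq)
qed

lemma le_powr_of_le_mult_powr:
  fixes x K q :: real
  assumes "0 < x" "1 < q" "x \<le> K * x powr (1 / q)"
  shows "x \<le> K powr (q / (q - 1))"
proof -
  have "x powr (1 - 1 / q) * x powr (1 / q) \<le> K * x powr (1 / q)"
    using assms by (simp add: powr_add[symmetric])
  then have "x powr (1 - 1 / q) \<le> K"
    using assms(1) by simp
  then have "(x powr (1 - 1 / q)) powr (q / (q - 1)) \<le> K powr (q / (q - 1))"
    using assms(2) by (intro powr_mono2) auto
  moreover have "(x powr (1 - 1 / q)) powr (q / (q - 1)) = x"
    using assms(1,2) by (simp add: powr_powr field_simps)
  ultimately show ?thesis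
    by simp
qed

section \<open>Testing a positive supersolution\<close>

locale lattice_supersolution =
  fixes u :: "int ^ 'd \<Rightarrow> real" and \<alpha> q :: real
  assumes q_gt_1: "1 < q"
    and u_pos: "\<And>x. 0 < u x"
    and supersolution: "\<And>x. lattice_laplacian u x + (1 + lattice_norm x) powr (- \<alpha>) * u x powr q \<le> 0"
begin

definition source :: "int ^ 'd \<Rightarrow> real" where
  "source x = (1 + lattice_norm x) powr (- \<alpha>) * u x powr q"

lemma source_pos: "0 < source x"
  using u_pos[of x] lattice_norm_nonneg[of x] by (simp add: source_def)

lemma source_nonneg: "0 \<le> source x"
  using source_pos[of x] by simp

lemma source_le_neg_laplacian: "source x \<le> - lattice_laplacian u x"
  using supersolution[of x] by (simp add: source_def)

definition test_exponent :: nat where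
  "test_exponent = nat \<lceil>q / (q - 1)\<rceil>"

lemma test_exponent_ge_2: "2 \<le> test_exponent"
proof -
  have "1 < q / (q - 1)"
    using q_gt_1 by simp
  then show ?thesis
    unfolding test_exponent_def by linarith
qed

lemma test_exponent_div_le: "real test_exponent / q \<le> real (test_exponent - 1)"
proof -
  have "q / (q - 1) \<le> real test_exponent"
    unfolding test_exponent_def by linarith
  then have "real test_exponent \<le> q * (real test_exponent - 1)"
    using q_gt_1 by (simp add: divide_le_eq algebra_simps)
  then show ?thesis
    using q_gt_1 test_exponent_ge_2 by (simp add: divide_le_eq mult.commute)
qed

definition test :: "nat \<Rightarrow> int ^ 'd \<Rightarrow> real" where
  "test n x = radial_cutoff (real n) x ^ test_exponent"

lemma test_nonneg: "0 \<le> test n x"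
  and test_le_1: "test n x \<le> 1"
  by (simp_all add: test_def radial_cutoff_nonneg radial_cutoff_le_1 power_le_one)

lemma test_eq_0:
  assumes "1 \<le> n" "x \<notin> lattice_box (2 * int n)"
  shows "test n x = 0"
proof -
  have "3 * (real n)\<^sup>2 \<le> lattice_sqnorm x"
    using assms(2) mem_lattice_box_if_lattice_sqnorm_less by force
  then have "radial_cutoff (real n) x = 0"
    using assms(1) by (intro radial_cutoff_eq_0) simp_all
  then show ?thesis
    using test_exponent_ge_2 by (simp add: test_def)
qed

lemma neg_lattice_laplacian_test_le:
  assumes "1 \<le> n"
  shows "- lattice_laplacian (test n) x \<le> (if x \<in> cutoff_annulus (real n)
    then 14 * real test_exponent / (real n)\<^sup>2 * radial_cutoff (real n) x ^ (test_exponent - 1) else 0)"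
  unfolding test_def[abs_def] using assms by (intro neg_lattice_laplacian_radial_cutoff_power_le) simp

lemma sum_lattice_laplacian_mult_test:
  assumes "1 \<le> n"
  shows "(\<Sum>x\<in>lattice_box (2 * int n + 1). lattice_laplacian f x * test n x) =
    (\<Sum>x\<in>lattice_box (2 * int n + 1). f x * lattice_laplacian (test n) x)"
  using test_eq_0[OF assms] lattice_box_mono[of "2 * int n" "2 * int n + 1"] lattice_nbrs_mem_lattice_box
  by (intro sum_lattice_laplacian_mult_commute[OF finite_lattice_box]) auto

definition tested_mass :: "nat \<Rightarrow> real" where
  "tested_mass n = (\<Sum>x\<in>lattice_box (2 * int n + 1). source x * test n x)"

lemma tested_mass_le:
  assumes n: "1 \<le> n"
  shows "tested_mass n \<le> 14 * real test_exponent / (real n)\<^sup>2 *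
    (\<Sum>x\<in>cutoff_annulus (real n). u x * radial_cutoff (real n) x ^ (test_exponent - 1))"
proof -
  define T :: "(int ^ 'd) set" where "T = lattice_box (2 * int n + 1)"
  define c where "c = 14 * real test_exponent / (real n)\<^sup>2"
  have "cutoff_annulus (real n) \<subseteq> T"
    unfolding T_def by (rule order.trans[OF cutoff_annulus_subset_lattice_box lattice_box_mono]) simp
  have "tested_mass n \<le> (\<Sum>x\<in>T. - lattice_laplacian u x * test n x)"
    unfolding tested_mass_def T_def
    by (intro sum_mono mult_right_mono source_le_neg_laplacian test_nonneg)
  also have "\<dots> = (\<Sum>x\<in>T. u x * - lattice_laplacian (test n) x)"
    using sum_lattice_laplacian_mult_test[OF n, of u] by (simp add: T_def sum_negf)
  also have "\<dots> \<le> (\<Sum>x\<in>T. if x \<in> cutoff_annulus (real n)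
      then c * (u x * radial_cutoff (real n) x ^ (test_exponent - 1)) else 0)"
  proof (intro sum_mono)
    fix x
    have "u x * - lattice_laplacian (test n) x \<le> u x * (if x \<in> cutoff_annulus (real n)
        then c * radial_cutoff (real n) x ^ (test_exponent - 1) else 0)"
      using neg_lattice_laplacian_test_le[OF n, of x] u_pos[of x]
      unfolding c_def by (intro mult_left_mono) simp_all
    then show "u x * - lattice_laplacian (test n) x \<le> (if x \<in> cutoff_annulus (real n)
        then c * (u x * radial_cutoff (real n) x ^ (test_exponent - 1)) else 0)"
      by (cases "x \<in> cutoff_annulus (real n)") (simp_all add: mult_ac)
  qed
  also have "\<dots> = c * (\<Sum>x\<in>cutoff_annulus (real n). u x * radial_cutoff (real n) x ^ (test_exponent - 1))"
    using \<open>cutoff_annulus (real n) \<subseteq> T\<close> unfolding T_def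
    by (simp add: sum.inter_restrict[OF finite_lattice_box, symmetric] Int_absorb1 sum_distrib_left)
  finally show ?thesis
    by (simp add: c_def)
qed

definition annulus_mass :: "nat \<Rightarrow> real" where
  "annulus_mass n = (\<Sum>x\<in>cutoff_annulus (real n). source x * test n x)"

definition weight :: "int ^ 'd \<Rightarrow> real" where
  "weight x = (1 + lattice_norm x) powr (\<alpha> / (q - 1))"

lemma source_test_weight_powr_eq:
  assumes "0 < radial_cutoff (real n) x"
  shows "(source x * test n x) powr (1 / q) * weight x powr (1 - 1 / q) =
    u x * radial_cutoff (real n) x powr (real test_exponent / q)"
proof -
  define W where "W = 1 + lattice_norm x"
  define p where "p = radial_cutoff (real n) x"
  have W: "0 < W"
    using lattice_norm_nonneg[of x] by (simp add: W_def)
  have "(source x * test n x) powr (1 / q) = W powr (- \<alpha> / q) * u x * p powr (real test_exponent / q)"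
    using W u_pos[of x] assms q_gt_1
    by (simp add: source_def test_def W_def[symmetric] p_def[symmetric] powr_mult powr_powr
        powr_realpow[symmetric])
  moreover have "weight x powr (1 - 1 / q) = W powr (\<alpha> / q)"
  proof -
    have "\<alpha> / (q - 1) * (1 - 1 / q) = \<alpha> / q"
      using q_gt_1 by (simp add: field_simps)
    then show ?thesis
      by (simp add: weight_def W_def[symmetric] powr_powr)
  qed
  moreover have "W powr (- \<alpha> / q) * W powr (\<alpha> / q) = 1"
    using W by (simp add: powr_add[symmetric])
  ultimately show ?thesis
    by (simp add: p_def mult_ac)
qed

lemma sum_cutoff_annulus_le_Holder:
  "(\<Sum>x\<in>cutoff_annulus (real n). u x * radial_cutoff (real n) x ^ (test_exponent - 1))
    \<le> annulus_mass n powr (1 / q) * (\<Sum>x\<in>cutoff_annulus (real n). weight x) powr (1 - 1 / q)"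
proof -
  have pos: "0 < radial_cutoff (real n) x" if "x \<in> cutoff_annulus (real n)" for x :: "int ^ 'd"
    using that by (intro radial_cutoff_pos) (simp add: cutoff_annulus_def)
  have "u x * radial_cutoff (real n) x ^ (test_exponent - 1)
      \<le> (source x * test n x) powr (1 / q) * weight x powr (1 - 1 / q)"
    if "x \<in> cutoff_annulus (real n)" for x
  proof -
    have "radial_cutoff (real n) x ^ (test_exponent - 1) =
        radial_cutoff (real n) x powr real (test_exponent - 1)"
      using pos[OF that] by (simp add: powr_realpow)
    also have "\<dots> \<le> radial_cutoff (real n) x powr (real test_exponent / q)"
      using pos[OF that] radial_cutoff_le_1 test_exponent_div_le by (intro powr_mono') auto
    finally show ?thesis
      using u_pos[of x] by (simp add: source_test_weight_powr_eq[OF pos[OF that]] mult_left_mono)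
  qed
  then have "(\<Sum>x\<in>cutoff_annulus (real n). u x * radial_cutoff (real n) x ^ (test_exponent - 1))
      \<le> (\<Sum>x\<in>cutoff_annulus (real n). (source x * test n x) powr (1 / q) * weight x powr (1 - 1 / q))"
    by (rule sum_mono)
  also have "\<dots> \<le> annulus_mass n powr (1 / q) * (\<Sum>x\<in>cutoff_annulus (real n). weight x) powr (1 - 1 / q)"
    unfolding annulus_mass_def
  proof (intro Holder_inequality_sum finite_cutoff_annulus)
    show "0 < source x * test n x" if "x \<in> cutoff_annulus (real n)" for x
      using pos[OF that] source_pos[of x] by (simp add: test_def)
    show "0 < weight x" for x
      using lattice_norm_nonneg[of x] by (simp add: weight_def)
  qed (use q_gt_1 in auto)
  finally show ?thesis .
qed

lemma weight_le_on_cutoff_annulus: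
  assumes n: "1 \<le> n" and x: "x \<in> cutoff_annulus (real n)"
  shows "weight x \<le> 3 powr \<bar>\<alpha> / (q - 1)\<bar> * real n powr (\<alpha> / (q - 1))"
proof -
  define b where "b = \<alpha> / (q - 1)"
  define W where "W = 1 + lattice_norm x"
  have "lattice_norm x \<le> 2 * real n"
    using x by (intro lattice_norm_le_if_lattice_sqnorm_less) (simp_all add: cutoff_annulus_def)
  then have W: "real n < W" "W \<le> 3 * real n"
    using x n by (simp_all add: W_def cutoff_annulus_def)
  have "1 \<le> 3 powr \<bar>b\<bar>"
    by (simp add: ge_one_powr_ge_zero)
  show ?thesis
  proof (cases "0 \<le> b")
    case True
    then have "W powr b \<le> (3 * real n) powr b"
      using W by (intro powr_mono2) auto
    then show ?thesis
      using True by (simp add: weight_def W_def[symmetric] b_def[symmetric] powr_mult)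
  next
    case False
    then have "W powr b \<le> real n powr b"
      using W n by (intro powr_mono2') auto
    also have "\<dots> \<le> 3 powr \<bar>b\<bar> * real n powr b"
      using mult_right_mono[OF \<open>1 \<le> 3 powr \<bar>b\<bar>\<close>, of "real n powr b"] by simp
    finally show ?thesis
      by (simp add: weight_def W_def[symmetric] b_def[symmetric])
  qed
qed

lemma sum_weight_cutoff_annulus_le:
  assumes n: "1 \<le> n"
  shows "(\<Sum>x\<in>cutoff_annulus (real n). weight x) \<le>
    5 ^ CARD('d) * 3 powr \<bar>\<alpha> / (q - 1)\<bar> * real n powr (real CARD('d) + \<alpha> / (q - 1))"
proof -
  define A :: "(int ^ 'd) set" where "A = cutoff_annulus (real n)"
  define B where "B = 3 powr \<bar>\<alpha> / (q - 1)\<bar> * real n powr (\<alpha> / (q - 1))"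
  have "card A \<le> (4 * n + 1) ^ CARD('d)"
    using card_mono[OF finite_lattice_box cutoff_annulus_subset_lattice_box]
    by (simp add: A_def card_lattice_box nat_add_distrib nat_mult_distrib)
  then have "real (card A) \<le> real ((4 * n + 1) ^ CARD('d))"
    by (simp only: of_nat_le_iff)
  also have "\<dots> = (4 * real n + 1) ^ CARD('d)"
    by (simp add: add.commute)
  also have "\<dots> \<le> (5 * real n) ^ CARD('d)"
    using n by (intro power_mono) auto
  finally have card: "real (card A) \<le> (5 * real n) ^ CARD('d)" .
  have "(\<Sum>x\<in>A. weight x) \<le> real (card A) * B"
    using weight_le_on_cutoff_annulus[OF n] unfolding A_def B_def by (rule sum_bounded_above)
  also have "\<dots> \<le> (5 * real n) ^ CARD('d) * B"
    using card by (rule mult_right_mono) (simp add: B_def)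
  also have "\<dots> = 5 ^ CARD('d) * 3 powr \<bar>\<alpha> / (q - 1)\<bar> * real n powr (real CARD('d) + \<alpha> / (q - 1))"
    using n by (simp add: B_def powr_add powr_realpow power_mult_distrib)
  finally show ?thesis
    by (simp add: A_def)
qed

lemma tested_mass_le_annulus_mass:
  assumes d: "3 \<le> CARD('d)" and q: "q \<le> (real CARD('d) - \<alpha>) / (real CARD('d) - 2)"
  obtains K where "0 < K" "\<And>n. 1 \<le> n \<Longrightarrow> tested_mass n \<le> K * annulus_mass n powr (1 / q)"
proof
  define C where "C = 5 ^ CARD('d) * 3 powr \<bar>\<alpha> / (q - 1)\<bar>"
  define K where "K = 14 * real test_exponent * C powr (1 - 1 / q)"
  define e where "e = (real CARD('d) + \<alpha> / (q - 1)) * (1 - 1 / q)"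
  show "0 < K"
    using test_exponent_ge_2 by (simp add: K_def C_def)
  have e: "e \<le> 2"
    unfolding e_def using d q_gt_1 q by (intro scaling_exponent_le_2) simp_all
  fix n :: nat
  assume n: "1 \<le> n"
  define S where "S = (\<Sum>x\<in>cutoff_annulus (real n). weight x)"
  have "S powr (1 - 1 / q) \<le> (C * real n powr (real CARD('d) + \<alpha> / (q - 1))) powr (1 - 1 / q)"
    using sum_weight_cutoff_annulus_le[OF n] q_gt_1 unfolding S_def C_def
    by (intro powr_mono2) (auto intro: sum_nonneg simp: weight_def)
  also have "\<dots> = C powr (1 - 1 / q) * real n powr e"
    by (simp add: C_def e_def powr_mult powr_powr)
  finally have S: "S powr (1 - 1 / q) \<le> C powr (1 - 1 / q) * real n powr e" .
  have "tested_mass n \<le>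
      14 * real test_exponent / (real n)\<^sup>2 * (annulus_mass n powr (1 / q) * S powr (1 - 1 / q))"
    using tested_mass_le[OF n] sum_cutoff_annulus_le_Holder[of n] unfolding S_def
    by (elim order.trans) (intro mult_left_mono, simp_all)
  also have "\<dots> \<le> 14 * real test_exponent / (real n)\<^sup>2 *
      (annulus_mass n powr (1 / q) * (C powr (1 - 1 / q) * real n powr e))"
    using S by (intro mult_left_mono) simp_all
  also have "\<dots> = K * annulus_mass n powr (1 / q) * (real n powr e / real n powr 2)"
    using n by (simp add: K_def powr_realpow)
  also have "\<dots> \<le> K * annulus_mass n powr (1 / q)"
  proof (rule mult_left_le)
    have "real n powr e \<le> real n powr 2"
      using n e by (intro powr_mono) auto
    then show "real n powr e / real n powr 2 \<le> 1"
      using n by simp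
    show "0 \<le> K * annulus_mass n powr (1 / q)"
      using \<open>0 < K\<close> by simp
  qed
  finally show "tested_mass n \<le> K * annulus_mass n powr (1 / q)" .
qed

lemma annulus_mass_nonneg: "0 \<le> annulus_mass n"
  unfolding annulus_mass_def by (intro sum_nonneg mult_nonneg_nonneg test_nonneg source_nonneg)

lemma annulus_mass_le_tested_mass: "annulus_mass n \<le> tested_mass n"
  unfolding annulus_mass_def tested_mass_def
  using cutoff_annulus_subset_lattice_box lattice_box_mono[of "2 * int n" "2 * int n + 1"]
  by (intro sum_mono2 finite_lattice_box) (auto intro: mult_nonneg_nonneg test_nonneg source_nonneg)

definition ball_mass :: "nat \<Rightarrow> real" where
  "ball_mass m = (\<Sum>x | lattice_norm x \<le> real m. source x)"

lemma incseq_ball_mass: "incseq ball_mass"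
  unfolding incseq_def ball_mass_def
  by (auto intro!: sum_mono2 finite_lattice_ball simp: source_nonneg)

lemma source_0_le_ball_mass: "source 0 \<le> ball_mass m"
proof -
  have "lattice_norm (0 :: int ^ 'd) \<le> real m"
    by (simp add: lattice_norm_def)
  then show ?thesis
    unfolding ball_mass_def by (intro member_le_sum finite_lattice_ball) (simp_all add: source_nonneg)
qed

lemma ball_mass_le_tested_mass:
  assumes "1 \<le> n"
  shows "ball_mass n \<le> tested_mass n"
proof -
  have "ball_mass n = (\<Sum>x | lattice_norm x \<le> real n. source x * test n x)"
    unfolding ball_mass_def test_def by (intro sum.cong) (simp_all add: radial_cutoff_eq_1)
  also have "\<dots> \<le> tested_mass n"
    unfolding tested_mass_def
    using lattice_ball_subset_lattice_box[of n] lattice_box_mono[of "int n" "2 * int n + 1"]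
    by (intro sum_mono2 finite_lattice_box) (auto intro: mult_nonneg_nonneg test_nonneg source_nonneg)
  finally show ?thesis .
qed

lemma annulus_mass_le_ball_mass_diff: "annulus_mass (Suc n) \<le> ball_mass (2 * Suc n) - ball_mass n"
proof -
  have sub: "cutoff_annulus (real (Suc n)) \<subseteq>
      {x. lattice_norm x \<le> real (2 * Suc n)} - {x. lattice_norm x \<le> real n}"
    using lattice_norm_le_if_lattice_sqnorm_less[of _ "real (Suc n)"]
    by (auto simp: cutoff_annulus_def)
  have "annulus_mass (Suc n) \<le> (\<Sum>x\<in>cutoff_annulus (real (Suc n)). source x)"
    unfolding annulus_mass_def using test_le_1 source_nonneg
    by (intro sum_mono) (simp add: mult_left_le)
  also have "\<dots> \<le> (\<Sum>x\<in>{x. lattice_norm x \<le> real (2 * Suc n)} - {x. lattice_norm x \<le> real n}. source x)"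
    using sub by (intro sum_mono2 finite_Diff finite_lattice_ball) (auto simp: source_nonneg)
  also have "\<dots> = ball_mass (2 * Suc n) - ball_mass n"
    unfolding ball_mass_def by (intro sum_diff finite_lattice_ball) auto
  finally show ?thesis .
qed

lemma annulus_mass_tendsto_0:
  assumes "\<And>m. ball_mass m \<le> M"
  shows "(\<lambda>n. annulus_mass (Suc n)) \<longlonglongrightarrow> 0"
proof -
  obtain L where L: "ball_mass \<longlonglongrightarrow> L"
    using incseq_convergent[OF incseq_ball_mass] assms by blast
  have "strict_mono (\<lambda>n. 2 * Suc n)"
    by (rule strict_monoI) simp
  then have "(\<lambda>n. ball_mass (2 * Suc n)) \<longlonglongrightarrow> L"
    using LIMSEQ_subseq_LIMSEQ[OF L] by (simp add: o_def)
  then have "(\<lambda>n. ball_mass (2 * Suc n) - ball_mass n) \<longlonglongrightarrow> L - L"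
    using L by (rule tendsto_diff)
  then have diff: "(\<lambda>n. ball_mass (2 * Suc n) - ball_mass n) \<longlonglongrightarrow> 0"
    by simp
  show ?thesis
    by (rule tendsto_sandwich[OF _ _ tendsto_const diff])
      (blast intro: always_eventually annulus_mass_nonneg annulus_mass_le_ball_mass_diff)+
qed

lemma critical_exponent_less:
  assumes "3 \<le> CARD('d)"
  shows "(real CARD('d) - \<alpha>) / (real CARD('d) - 2) < q"
proof (rule ccontr)
  assume "\<not> ?thesis"
  then have "q \<le> (real CARD('d) - \<alpha>) / (real CARD('d) - 2)"
    by simp
  then obtain K where K: "0 < K"
    and bound: "\<And>n. 1 \<le> n \<Longrightarrow> tested_mass n \<le> K * annulus_mass n powr (1 / q)"
    using tested_mass_le_annulus_mass[OF assms] by blast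
  have tested_mass_bounded: "tested_mass n \<le> K powr (q / (q - 1))" if n: "1 \<le> n" for n
  proof (rule le_powr_of_le_mult_powr[OF _ q_gt_1])
    show "0 < tested_mass n"
      using source_pos[of 0] source_0_le_ball_mass[of n] ball_mass_le_tested_mass[OF n] by linarith
    have "annulus_mass n powr (1 / q) \<le> tested_mass n powr (1 / q)"
      using annulus_mass_nonneg annulus_mass_le_tested_mass q_gt_1 by (intro powr_mono2) auto
    then show "tested_mass n \<le> K * tested_mass n powr (1 / q)"
      using bound[OF n] K by (elim order.trans) (simp add: mult_left_mono)
  qed
  have "ball_mass m \<le> K powr (q / (q - 1))" for m
    using incseq_SucD[OF incseq_ball_mass, of m] ball_mass_le_tested_mass[of "Suc m"]
      tested_mass_bounded[of "Suc m"] by simp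
  then have "(\<lambda>n. K * annulus_mass (Suc n) powr (1 / q)) \<longlonglongrightarrow> 0"
    using annulus_mass_nonneg q_gt_1
    by (intro tendsto_mult_right_zero tendsto_zero_powrI[where b = "1 / q"] annulus_mass_tendsto_0) simp_all
  then have "\<forall>\<^sub>F n in sequentially. K * annulus_mass (Suc n) powr (1 / q) < source 0"
    using source_pos by (rule order_tendstoD(2))
  then obtain N where "K * annulus_mass (Suc N) powr (1 / q) < source 0"
    unfolding eventually_sequentially by blast
  moreover have "source 0 \<le> tested_mass (Suc N)"
    using order.trans[OF source_0_le_ball_mass ball_mass_le_tested_mass] by simp
  ultimately show False
    using bound[of "Suc N"] by simp
qed

end

theorem theorem7p4:
  fixes \<alpha> q :: real
  assumes "CARD('d) \<ge> 3"
    and "\<alpha> < 2"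
    and "1 < q"
    and "q \<le> (real CARD('d) - \<alpha>) / (real CARD('d) - 2)"
  shows "\<not> (\<exists>u :: int ^ 'd \<Rightarrow> real. (\<forall>x. u x > 0) \<and>
            (\<forall>x. lattice_laplacian u x + (1 + lattice_norm x) powr (- \<alpha>) * (u x) powr q \<le> 0))"
proof
  assume "\<exists>u :: int ^ 'd \<Rightarrow> real. (\<forall>x. u x > 0) \<and>
            (\<forall>x. lattice_laplacian u x + (1 + lattice_norm x) powr (- \<alpha>) * (u x) powr q \<le> 0)"
  then obtain u :: "int ^ 'd \<Rightarrow> real" where "\<And>x. 0 < u x"
    and "\<And>x. lattice_laplacian u x + (1 + lattice_norm x) powr (- \<alpha>) * u x powr q \<le> 0"
    by blast
  then interpret lattice_supersolution u \<alpha> q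
    using \<open>1 < q\<close> by unfold_locales
  show False
    using critical_exponent_less[OF assms(1)] assms(4) by linarith
qed

end
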